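(* Let $P$ be a non-trivial classifier on $\mathbb{R}^n$ (i.e. its label set $L_P$ has more than one element) with infinite pointwise coverage. Then $P$ is a refined linear classifier.
   Context: A classifier is a partition $P$ of $\mathbb{R}^n$ together with a distinguished member $R \in P$, the refinement set, which may be empty and which is both meagre and Lebesgue null. The label set is $L_P = P \setminus \{R\}$ and the feature space is $\bigcup L_P$. $P$ is trivial if $L_P$ is a singleton and non-trivial otherwise. For $x \in \mathbb{R}^n$, $P(x)$ denotes the member of $P$ containing $x$. An anchor for $x$ is an open ball $A = B(c,r)$ with $x \in A \subseteq P(x)$; its coverage is $r$. The coverage of $P$ at $x$ is $C_P(x) = \sup\{ r : B(c,r) \text{ is an anchor for } x\}$ ($0$ if no anchor exists, $\infty$ if anchors of arbitrarily large radius exist). $P$ has infinite pointwise coverage if $C_P(x) = \infty$ for every $x$ in the feature space. A refined linear classifier is a classifier $P = \{M, N, R\}$ with $L_P = \{M, N\}$, where $R$ is an affine hyperplane and $M, N$ are the two open halfspaces on either side of $R$. *)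

theory Defs
  imports "HOL-Analysis.Analysis"
begin

definition nowhere_dense :: "'a::topological_space set \<Rightarrow> bool" where
  "nowhere_dense S \<longleftrightarrow> interior (closure S) = {}"

definition meagre :: "'a::topological_space set \<Rightarrow> bool" where
  "meagre S \<longleftrightarrow> (\<exists>F::nat \<Rightarrow> 'a set. (\<forall>k. nowhere_dense (F k)) \<and> S \<subseteq> (\<Union>k. F k))"

definition classifier :: "(real^'n) set set \<Rightarrow> (real^'n) set \<Rightarrow> bool" where
  "classifier P R \<longleftrightarrow>
     \<Union>P = UNIV \<and>
     (\<forall>A\<in>P. \<forall>B\<in>P. A \<noteq> B \<longrightarrow> A \<inter> B = {}) \<and>
     (\<forall>A\<in>P. A \<noteq> R \<longrightarrow> A \<noteq> {}) \<and>
     R \<in> P \<and> meagre R \<and> R \<in> null_sets lebesgue"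

definition label_set :: "'a set set \<Rightarrow> 'a set \<Rightarrow> 'a set set" where
  "label_set P R = P - {R}"

definition feature_space :: "'a set set \<Rightarrow> 'a set \<Rightarrow> 'a set" where
  "feature_space P R = \<Union>(label_set P R)"

definition nontrivial :: "'a set set \<Rightarrow> 'a set \<Rightarrow> bool" where
  "nontrivial P R \<longleftrightarrow> \<not> (\<exists>A. label_set P R = {A})"

definition cell :: "'a set set \<Rightarrow> 'a \<Rightarrow> 'a set" where
  "cell P x = (THE A. A \<in> P \<and> x \<in> A)"

definition anchor :: "(real^'n) set set \<Rightarrow> real^'n \<Rightarrow> real^'n \<Rightarrow> real \<Rightarrow> bool" where
  "anchor P x c r \<longleftrightarrow> x \<in> ball c r \<and> ball c r \<subseteq> cell P x"

definition coverage :: "(real^'n) set set \<Rightarrow> real^'n \<Rightarrow> ereal" where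
  "coverage P x = (if \<exists>c r. anchor P x c r
                   then Sup {ereal r | r. \<exists>c. anchor P x c r} else 0)"

definition infinite_pointwise_coverage :: "(real^'n) set set \<Rightarrow> (real^'n) set \<Rightarrow> bool" where
  "infinite_pointwise_coverage P R \<longleftrightarrow> (\<forall>x\<in>feature_space P R. coverage P x = \<infinity>)"

definition refined_linear_classifier :: "(real^'n) set set \<Rightarrow> (real^'n) set \<Rightarrow> bool" where
  "refined_linear_classifier P R \<longleftrightarrow> classifier P R \<and>
     (\<exists>a b. a \<noteq> 0 \<and> R = {x. a \<bullet> x = b} \<and>
        label_set P R = {{x. a \<bullet> x < b}, {x. a \<bullet> x > b}})"

end

theory Submission
  imports Defs
begin

text \<open>At every point x of a label, anchors of unbounded radius exist. Along a subsequence the unit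
  directions from x to their centres converge to some u, and the balls then exhaust the open
  halfspace u \<bullet> y > u \<bullet> x, so every label contains such a halfspace at each of its points.
  Disjoint sets containing open halfspaces have opposite unit normals; hence there are exactly two
  labels, with normals a and -a at all of their points, and being open they are the halfspaces
  a \<bullet> y > t and a \<bullet> y < s with s \<le> t. The refinement set is then the slab s \<le> a \<bullet> y \<le> t,
  which is null only if s = t.\<close>

lemma exists_inner_eq:
  fixes a :: "'a::real_inner"
  assumes "a \<noteq> 0"
  shows "\<exists>y. a \<bullet> y = c"
proof
  show "a \<bullet> ((c / (a \<bullet> a)) *\<^sub>R a) = c" using assms by simp
qed

lemma open_subset_null_set_empty:
  fixes U :: "'a::euclidean_space set"
  assumes "N \<in> null_sets lebesgue" "open U" "U \<subseteq> N"
  shows "U = {}"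
  using assms negligible_subset open_not_negligible negligible_iff_null_sets by metis

lemma null_slab_imp_le:
  fixes a :: "'a::euclidean_space"
  assumes "a \<noteq> 0" "{y. s \<le> a \<bullet> y \<and> a \<bullet> y \<le> t} \<in> null_sets lebesgue"
  shows "t \<le> s"
proof (rule ccontr)
  assume "\<not> t \<le> s"
  have "{y. s < a \<bullet> y} \<inter> {y. a \<bullet> y < t} = {}"
    by (rule open_subset_null_set_empty[OF assms(2)]) (auto simp: open_halfspace_gt open_halfspace_lt)
  moreover obtain y where "a \<bullet> y = (s + t) / 2" using exists_inner_eq assms(1) by blast
  then have "y \<in> {y. s < a \<bullet> y} \<inter> {y. a \<bullet> y < t}" using \<open>\<not> t \<le> s\<close> by simp
  ultimately show False by blast
qed

lemma disjoint_halfspaces_opposite_normals: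
  fixes u v :: "'a::real_inner"
  assumes "norm u = 1" "{y. s < u \<bullet> y} \<subseteq> C" "norm v = 1" "{y. t < v \<bullet> y} \<subseteq> D"
    and "C \<inter> D = {}"
  shows "v = - u"
proof (rule ccontr)
  assume "v \<noteq> - u"
  then have "0 < (u + v) \<bullet> (u + v)"
    by (metis add_eq_0_iff inner_gt_zero_iff)
  also have "(u + v) \<bullet> (u + v) = 2 * (1 + u \<bullet> v)"
    using assms(1,3) by (simp add: inner_add_left inner_add_right inner_commute norm_eq_1)
  finally have pos: "0 < 1 + u \<bullet> v" by simp
  define y where "y = ((\<bar>s\<bar> + \<bar>t\<bar> + 1) / (1 + u \<bullet> v)) *\<^sub>R (u + v)"
  have "u \<bullet> y = \<bar>s\<bar> + \<bar>t\<bar> + 1" "v \<bullet> y = \<bar>s\<bar> + \<bar>t\<bar> + 1"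
    using assms(1,3) pos by (simp_all add: y_def inner_add_right inner_commute norm_eq_1 add.commute)
  then have "y \<in> C \<inter> D" using assms(2,4) by force
  with assms(5) show False by blast
qed

lemma ball_contains_point_in_direction:
  fixes u z :: "'a::real_inner"
  assumes "norm u = 1" "0 \<le> D" "D < r" "norm z < r" "norm z ^ 2 < 2 * r * (u \<bullet> z)"
  shows "x + z \<in> ball (x + D *\<^sub>R u) r"
proof -
  have "(dist (x + D *\<^sub>R u) (x + z))\<^sup>2 = (D *\<^sub>R u - z) \<bullet> (D *\<^sub>R u - z)"
    by (simp add: dist_norm power2_norm_eq_inner)
  also have "\<dots> = D\<^sup>2 * (u \<bullet> u) - 2 * D * (u \<bullet> z) + z \<bullet> z"
    by (simp add: inner_diff_left inner_diff_right inner_commute power2_eq_square algebra_simps)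
  also have "\<dots> = D\<^sup>2 - 2 * D * (u \<bullet> z) + (norm z)\<^sup>2"
    using assms(1) by (simp add: norm_eq_1 dot_square_norm)
  also have "\<dots> < r\<^sup>2"
    \<comment> \<open>r^2 - D^2 + 2 D (u \<bullet> z) is concave in D, so on [0, r] it is at least r * min r (2 (u \<bullet> z))\<close>
  proof (cases "r \<le> 2 * (u \<bullet> z)")
    case True
    then have "D * r \<le> D * (2 * (u \<bullet> z))" using assms(2) by (rule mult_left_mono)
    moreover have "D * D \<le> D * r" using assms(2,3) by (simp add: mult_left_mono)
    moreover have "(norm z)\<^sup>2 < r\<^sup>2" using assms(4) by (simp add: power_strict_mono)
    ultimately show ?thesis by (simp add: power2_eq_square)
  next
    case False
    have "0 \<le> (r - D) * (r + D - 2 * (u \<bullet> z))" using False assms(2,3) by simp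
    then show ?thesis using assms(5) by (simp add: power2_eq_square algebra_simps)
  qed
  finally have "(dist (x + D *\<^sub>R u) (x + z))\<^sup>2 < r\<^sup>2" .
  then show ?thesis
    using assms(2,3) power2_less_imp_less[of "dist (x + D *\<^sub>R u) (x + z)" r] by simp
qed

lemma eventually_in_balls_towards_direction:
  fixes x :: "'a::real_inner"
  assumes r_top: "filterlim r at_top sequentially"
    and x_in: "\<And>k. x \<in> ball (c k) (r k)"
    and u_unit: "\<And>k. norm (u k) = 1"
    and c_eq: "\<And>k. c k - x = norm (c k - x) *\<^sub>R u k"
    and lim: "u \<longlonglongrightarrow> l" and "l \<bullet> x < l \<bullet> y"
  shows "\<forall>\<^sub>F k in sequentially. y \<in> ball (c k) (r k)"
proof -
  define z where "z = y - x"
  have lz: "0 < l \<bullet> z" using \<open>l \<bullet> x < l \<bullet> y\<close> by (simp add: z_def inner_diff_right)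
  have "(\<lambda>k. u k \<bullet> z) \<longlonglongrightarrow> l \<bullet> z" using lim by (intro tendsto_inner tendsto_const)
  then have "\<forall>\<^sub>F k in sequentially. l \<bullet> z / 2 < u k \<bullet> z"
    using lz by (intro order_tendstoD(1)) auto
  moreover have "\<forall>\<^sub>F k in sequentially. norm z < r k"
    and "\<forall>\<^sub>F k in sequentially. (norm z)\<^sup>2 / (l \<bullet> z) < r k"
    using r_top by (simp_all add: filterlim_at_top_dense)
  ultimately show ?thesis
  proof eventually_elim
    case (elim k)
    have "0 < r k" using elim(2) norm_ge_zero[of z] by linarith
    have "(norm z)\<^sup>2 < r k * (l \<bullet> z)" using elim(3) lz by (simp add: divide_less_eq)
    also have "\<dots> < 2 * r k * (u k \<bullet> z)" using elim(1) \<open>0 < r k\<close> by simp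
    finally have "x + z \<in> ball (x + norm (c k - x) *\<^sub>R u k) (r k)"
      using elim(2) x_in[of k] u_unit[of k]
      by (intro ball_contains_point_in_direction) (auto simp: dist_norm norm_minus_commute)
    then show ?case using c_eq[of k] by (simp add: z_def algebra_simps)
  qed
qed

lemma halfspace_of_arbitrarily_large_balls:
  fixes x :: "'a::euclidean_space"
  assumes "\<And>\<rho>. \<exists>c r. \<rho> \<le> r \<and> x \<in> ball c r \<and> ball c r \<subseteq> A"
  shows "\<exists>u. norm u = 1 \<and> {y. u \<bullet> x < u \<bullet> y} \<subseteq> A"
proof -
  have "\<forall>k::nat. \<exists>c r. real k \<le> r \<and> x \<in> ball c r \<and> ball c r \<subseteq> A"
    using assms by blast
  then obtain c r where r_ge: "\<And>k::nat. real k \<le> r k" and x_in: "\<And>k. x \<in> ball (c k) (r k)"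
    and ball_sub: "\<And>k. ball (c k) (r k) \<subseteq> A"
    by (auto simp: choice_iff)
  have polar: "\<exists>w. norm w = 1 \<and> v = norm v *\<^sub>R w" for v :: 'a
  proof (cases "v = 0")
    case True
    obtain w :: 'a where "norm w = 1" using vector_choose_size zero_le_one by blast
    with True show ?thesis by auto
  next
    case False
    then show ?thesis by (intro exI[of _ "sgn v"]) (simp add: norm_sgn sgn_div_norm)
  qed
  have "\<forall>k. \<exists>w. norm w = 1 \<and> c k - x = norm (c k - x) *\<^sub>R w"
    using polar by blast
  then obtain u where u_unit: "\<And>k. norm (u k) = 1"
    and c_eq: "\<And>k. c k - x = norm (c k - x) *\<^sub>R u k"
    by (auto simp: choice_iff)
  obtain l \<phi> where l: "l \<in> sphere 0 1" and \<phi>: "strict_mono \<phi>" and lim: "(u \<circ> \<phi>) \<longlonglongrightarrow> l"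
    using seq_compactE[OF compact_imp_seq_compact[OF compact_sphere], of u 0 1] u_unit by auto
  have r_top: "filterlim (r \<circ> \<phi>) at_top sequentially"
    by (rule filterlim_at_top_mono[OF filterlim_compose[OF filterlim_real_sequentially
          filterlim_subseq[OF \<phi>]]]) (simp add: r_ge)
  have "y \<in> A" if "l \<bullet> x < l \<bullet> y" for y
  proof -
    have "\<forall>\<^sub>F k in sequentially. y \<in> ball ((c \<circ> \<phi>) k) ((r \<circ> \<phi>) k)"
      by (rule eventually_in_balls_towards_direction[OF r_top _ _ _ lim that])
        (simp_all only: comp_apply x_in u_unit c_eq[symmetric])
    then obtain k where "y \<in> ball (c (\<phi> k)) (r (\<phi> k))"
      using eventually_happens' sequentially_bot by fastforce
    then show "y \<in> A" using ball_sub by blast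
  qed
  then show ?thesis using l by auto
qed

lemma upward_closed_open_eq_halfspace:
  fixes a :: "'a::real_inner"
  assumes "open S" "a \<noteq> 0" "S \<noteq> {}" "bdd_below ((\<lambda>x. a \<bullet> x) ` S)"
    and upward: "\<And>x y. x \<in> S \<Longrightarrow> a \<bullet> x < a \<bullet> y \<Longrightarrow> y \<in> S"
  shows "S = {y. Inf ((\<lambda>x. a \<bullet> x) ` S) < a \<bullet> y}"
proof (intro equalityI subsetI CollectI)
  fix x assume "x \<in> S"
  then obtain e where "e > 0" "ball x e \<subseteq> S" using \<open>open S\<close> openE by blast
  define x' where "x' = x - (e / (2 * norm a)) *\<^sub>R a"
  have "dist x x' = e / (2 * norm a) * norm a"
    using \<open>e > 0\<close> by (simp add: x'_def dist_norm)
  also have "\<dots> = e / 2" using \<open>a \<noteq> 0\<close> by simp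
  finally have "dist x x' = e / 2" .
  then have "x' \<in> S" using \<open>e > 0\<close> \<open>ball x e \<subseteq> S\<close> by (simp add: subset_iff)
  then have "Inf ((\<lambda>x. a \<bullet> x) ` S) \<le> a \<bullet> x'" using assms(4) by (intro cInf_lower) auto
  also have "a \<bullet> x' = a \<bullet> x - e / 2 * norm a"
    using \<open>a \<noteq> 0\<close> by (simp add: x'_def inner_diff_right dot_square_norm power2_eq_square)
  also have "\<dots> < a \<bullet> x" using \<open>a \<noteq> 0\<close> \<open>e > 0\<close> by simp
  finally show "Inf ((\<lambda>x. a \<bullet> x) ` S) < a \<bullet> x" .
next
  fix y assume "y \<in> {y. Inf ((\<lambda>x. a \<bullet> x) ` S) < a \<bullet> y}"
  then obtain x where "x \<in> S" "a \<bullet> x < a \<bullet> y"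
    using cInf_lessD[of "(\<lambda>x. a \<bullet> x) ` S" "a \<bullet> y"] \<open>S \<noteq> {}\<close> by auto
  then show "y \<in> S" using upward by blast
qed

lemma disjoint_halfspace_family_eq_pair:
  fixes L :: "'a::real_inner set set"
  assumes disj: "\<And>C D. C \<in> L \<Longrightarrow> D \<in> L \<Longrightarrow> C \<noteq> D \<Longrightarrow> C \<inter> D = {}"
    and nonempty: "\<And>C. C \<in> L \<Longrightarrow> C \<noteq> {}"
    and halfspace: "\<And>C x. C \<in> L \<Longrightarrow> x \<in> C \<Longrightarrow> \<exists>u. norm u = 1 \<and> {y. u \<bullet> x < u \<bullet> y} \<subseteq> C"
    and "A \<in> L" "B \<in> L" "A \<noteq> B"
  shows "\<exists>a. norm a = 1 \<and> L = {A, B} \<and>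
    (\<forall>x y. x \<in> A \<longrightarrow> a \<bullet> x < a \<bullet> y \<longrightarrow> y \<in> A) \<and>
    (\<forall>x y. x \<in> B \<longrightarrow> a \<bullet> y < a \<bullet> x \<longrightarrow> y \<in> B)"
proof -
  obtain x\<^sub>A where "x\<^sub>A \<in> A" using nonempty \<open>A \<in> L\<close> by blast
  then obtain a where a: "norm a = 1" "{y. a \<bullet> x\<^sub>A < a \<bullet> y} \<subseteq> A"
    using halfspace \<open>A \<in> L\<close> by blast
  obtain x\<^sub>B where "x\<^sub>B \<in> B" using nonempty \<open>B \<in> L\<close> by blast
  then obtain b where b: "norm b = 1" "{y. b \<bullet> x\<^sub>B < b \<bullet> y} \<subseteq> B"
    using halfspace \<open>B \<in> L\<close> by blast
  have "b = - a" by (rule disjoint_halfspaces_opposite_normals[OF a b disj]) fact+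
  have normal: "(C \<noteq> B \<longrightarrow> u = a) \<and> (C \<noteq> A \<longrightarrow> u = - a)"
    if "C \<in> L" "norm u = 1" "{y. u \<bullet> x < u \<bullet> y} \<subseteq> C" for C u x
    using disjoint_halfspaces_opposite_normals[OF that(2-3) b disj[OF that(1) \<open>B \<in> L\<close>]]
      disjoint_halfspaces_opposite_normals[OF a that(2-3) disj[OF \<open>A \<in> L\<close> that(1)]] \<open>b = - a\<close>
    by auto
  have "C \<in> {A, B}" if "C \<in> L" for C
  proof (rule ccontr)
    assume "C \<notin> {A, B}"
    obtain x where "x \<in> C" using nonempty \<open>C \<in> L\<close> by blast
    then obtain u where "norm u = 1" "{y. u \<bullet> x < u \<bullet> y} \<subseteq> C"
      using halfspace \<open>C \<in> L\<close> by blast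
    then have "a = - a" using normal[OF \<open>C \<in> L\<close>] \<open>C \<notin> {A, B}\<close> by auto
    then have "norm (2 *\<^sub>R a) = 0" by (metis scaleR_2 add.right_inverse norm_zero)
    then show False using a(1) by simp
  qed
  then have "L = {A, B}" using \<open>A \<in> L\<close> \<open>B \<in> L\<close> by blast
  moreover have "a \<bullet> x < a \<bullet> y \<longrightarrow> y \<in> A" if "x \<in> A" for x y
    using halfspace[OF \<open>A \<in> L\<close> that] normal[OF \<open>A \<in> L\<close>] \<open>A \<noteq> B\<close> by blast
  moreover have "a \<bullet> y < a \<bullet> x \<longrightarrow> y \<in> B" if "x \<in> B" for x y
    using halfspace[OF \<open>B \<in> L\<close> that] normal[OF \<open>B \<in> L\<close>] \<open>A \<noteq> B\<close> by force
  ultimately show ?thesis using a(1) by blast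
qed

lemma separated_open_sets_eq_halfspaces:
  fixes a :: "'a::real_inner"
  assumes "a \<noteq> 0" "open A" "open B" "A \<noteq> {}" "B \<noteq> {}" "A \<inter> B = {}"
    and upward: "\<And>x y. x \<in> A \<Longrightarrow> a \<bullet> x < a \<bullet> y \<Longrightarrow> y \<in> A"
    and downward: "\<And>x y. x \<in> B \<Longrightarrow> a \<bullet> y < a \<bullet> x \<Longrightarrow> y \<in> B"
  shows "\<exists>s t. s \<le> t \<and> A = {y. t < a \<bullet> y} \<and> B = {y. a \<bullet> y < s}"
proof -
  have below: "a \<bullet> z \<le> a \<bullet> x" if "x \<in> A" "z \<in> B" for x z
    using upward[OF \<open>x \<in> A\<close>, of z] \<open>z \<in> B\<close> \<open>A \<inter> B = {}\<close> by force
  obtain x\<^sub>A z\<^sub>B where "x\<^sub>A \<in> A" "z\<^sub>B \<in> B" using assms(4,5) by blast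
  define t where "t = Inf ((\<lambda>x. a \<bullet> x) ` A)"
  define s where "s = - Inf ((\<lambda>x. (- a) \<bullet> x) ` B)"
  have A_eq: "A = {y. t < a \<bullet> y}" unfolding t_def
  proof (rule upward_closed_open_eq_halfspace[OF assms(2,1,4) _ upward])
    show "bdd_below ((\<lambda>x. a \<bullet> x) ` A)"
      using below \<open>z\<^sub>B \<in> B\<close> by (intro bdd_belowI2[where m = "a \<bullet> z\<^sub>B"])
  qed
  have "B = {y. - s < (- a) \<bullet> y}" unfolding s_def minus_minus
  proof (rule upward_closed_open_eq_halfspace[OF assms(3)])
    show "bdd_below ((\<lambda>x. (- a) \<bullet> x) ` B)"
      using below \<open>x\<^sub>A \<in> A\<close> by (intro bdd_belowI2[where m = "- (a \<bullet> x\<^sub>A)"]) simp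
  qed (use assms(1,5) downward in auto)
  then have B_eq: "B = {y. a \<bullet> y < s}" by auto
  have "s \<le> t"
  proof (rule ccontr)
    assume "\<not> s \<le> t"
    obtain y where "a \<bullet> y = (s + t) / 2" using exists_inner_eq \<open>a \<noteq> 0\<close> by blast
    then have "y \<in> A \<inter> B" using \<open>\<not> s \<le> t\<close> A_eq B_eq by auto
    then show False using \<open>A \<inter> B = {}\<close> by blast
  qed
  with A_eq B_eq show ?thesis by blast
qed

lemma open_halfspace_family_eq_pair:
  fixes L :: "'a::real_inner set set"
  assumes disj: "\<And>C D. C \<in> L \<Longrightarrow> D \<in> L \<Longrightarrow> C \<noteq> D \<Longrightarrow> C \<inter> D = {}"
    and nonempty: "\<And>C. C \<in> L \<Longrightarrow> C \<noteq> {}"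
    and open_members: "\<And>C. C \<in> L \<Longrightarrow> open C"
    and halfspace: "\<And>C x. C \<in> L \<Longrightarrow> x \<in> C \<Longrightarrow> \<exists>u. norm u = 1 \<and> {y. u \<bullet> x < u \<bullet> y} \<subseteq> C"
    and AB: "A \<in> L" "B \<in> L" "A \<noteq> B"
  shows "\<exists>a s t. a \<noteq> 0 \<and> s \<le> t \<and> L = {{y. t < a \<bullet> y}, {y. a \<bullet> y < s}}"
proof -
  obtain a where a: "norm a = 1" "L = {A, B}"
    and up: "\<forall>x y. x \<in> A \<longrightarrow> a \<bullet> x < a \<bullet> y \<longrightarrow> y \<in> A"
    and down: "\<forall>x y. x \<in> B \<longrightarrow> a \<bullet> y < a \<bullet> x \<longrightarrow> y \<in> B"
    using disjoint_halfspace_family_eq_pair[OF disj nonempty halfspace AB] by blast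
  have "a \<noteq> 0" using a(1) by auto
  have "\<exists>s t. s \<le> t \<and> A = {y. t < a \<bullet> y} \<and> B = {y. a \<bullet> y < s}"
    by (rule separated_open_sets_eq_halfspaces[OF \<open>a \<noteq> 0\<close> open_members[OF AB(1)]
        open_members[OF AB(2)] nonempty[OF AB(1)] nonempty[OF AB(2)] disj[OF AB]])
      (use up down in blast)+
  then show ?thesis using \<open>a \<noteq> 0\<close> a(2) by blast
qed

lemma cell_eqI:
  assumes "classifier P R" "A \<in> P" "x \<in> A"
  shows "cell P x = A"
  unfolding cell_def
proof (rule the_equality)
  have "\<forall>A\<in>P. \<forall>B\<in>P. A \<noteq> B \<longrightarrow> A \<inter> B = {}" using assms(1) by (simp add: classifier_def)
  then show "B = A" if "B \<in> P \<and> x \<in> B" for B using that assms(2,3) by blast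
qed (use assms in blast)

lemma coverage_infinite_imp_large_anchor:
  assumes "coverage P x = \<infinity>"
  shows "\<exists>c s. r \<le> s \<and> anchor P x c s"
proof -
  have "\<exists>c r. anchor P x c r"
  proof (rule ccontr)
    assume "\<not> (\<exists>c r. anchor P x c r)"
    with assms show False by (simp add: coverage_def)
  qed
  then have "ereal r < Sup {ereal r | r. \<exists>c. anchor P x c r}" using assms by (simp add: coverage_def)
  then obtain s c where "r < s" "anchor P x c s" by (auto simp: less_Sup_iff)
  then show ?thesis by (meson less_imp_le)
qed

lemma label_large_balls:
  assumes "classifier P R" "infinite_pointwise_coverage P R" "A \<in> label_set P R" "x \<in> A"
  shows "\<exists>c s. r \<le> s \<and> x \<in> ball c s \<and> ball c s \<subseteq> A"
proof -
  have "coverage P x = \<infinity>"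
    using assms(2-4) unfolding infinite_pointwise_coverage_def feature_space_def by blast
  moreover have "cell P x = A" using assms(1,3,4) by (intro cell_eqI) (auto simp: label_set_def)
  ultimately show ?thesis using coverage_infinite_imp_large_anchor unfolding anchor_def by metis
qed

lemma label_open:
  assumes "classifier P R" "infinite_pointwise_coverage P R" "A \<in> label_set P R"
  shows "open A"
proof (rule openI)
  fix x assume "x \<in> A"
  then obtain c s where "x \<in> ball c s" "ball c s \<subseteq> A"
    using label_large_balls[OF assms, where r = 0] by blast
  moreover obtain e where "e > 0" "ball x e \<subseteq> ball c s"
    using openE[OF open_ball \<open>x \<in> ball c s\<close>] .
  ultimately show "\<exists>e>0. ball x e \<subseteq> A" by blast
qed

lemma label_contains_halfspace:
  assumes "classifier P R" "infinite_pointwise_coverage P R" "A \<in> label_set P R" "x \<in> A"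
  shows "\<exists>u. norm u = 1 \<and> {y. u \<bullet> x < u \<bullet> y} \<subseteq> A"
  by (rule halfspace_of_arbitrarily_large_balls) (rule label_large_balls[OF assms])

lemma label_set_disjoint:
  assumes "classifier P R" "C \<in> label_set P R" "D \<in> label_set P R" "C \<noteq> D"
  shows "C \<inter> D = {}"
  using assms by (simp add: classifier_def label_set_def)

lemma label_set_nonempty:
  assumes "classifier P R" "C \<in> label_set P R"
  shows "C \<noteq> {}"
  using assms by (simp add: classifier_def label_set_def)

lemma refinement_set_eq_complement:
  assumes "classifier P R"
  shows "R = - feature_space P R"
proof -
  have cover: "\<Union>P = UNIV" and disj: "\<forall>A\<in>P. \<forall>B\<in>P. A \<noteq> B \<longrightarrow> A \<inter> B = {}"
    and "R \<in> P"
    using assms by (simp_all add: classifier_def)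
  show ?thesis unfolding feature_space_def label_set_def
  proof (intro equalityI subsetI)
    fix x assume "x \<in> R"
    then show "x \<in> - \<Union>(P - {R})" using disj \<open>R \<in> P\<close> by blast
  next
    fix x assume "x \<in> - \<Union>(P - {R})"
    then show "x \<in> R" using cover by blast
  qed
qed

lemma nontrivial_classifier_two_labels:
  assumes "classifier P R" "nontrivial P R"
  obtains A B where "A \<in> label_set P R" "B \<in> label_set P R" "A \<noteq> B"
proof -
  have "R \<in> null_sets lebesgue" using assms(1) by (simp add: classifier_def)
  then have "R \<noteq> UNIV" using open_subset_null_set_empty[of R UNIV] by auto
  then have "label_set P R \<noteq> {}"
    using refinement_set_eq_complement[OF assms(1)] by (auto simp: feature_space_def)
  then show ?thesis using assms(2) that unfolding nontrivial_def by blast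
qed

theorem theorem3:
  fixes P :: "(real^'n) set set" and R :: "(real^'n) set"
  assumes "classifier P R"
    and "nontrivial P R"
    and "infinite_pointwise_coverage P R"
  shows "refined_linear_classifier P R"
proof -
  obtain A B where AB: "A \<in> label_set P R" "B \<in> label_set P R" "A \<noteq> B"
    using nontrivial_classifier_two_labels[OF assms(1,2)] .
  have "\<exists>a s t. a \<noteq> 0 \<and> s \<le> t \<and> label_set P R = {{y. t < a \<bullet> y}, {y. a \<bullet> y < s}}"
    by (rule open_halfspace_family_eq_pair[OF _ _ _ _ AB])
      (fact label_set_disjoint[OF assms(1)] label_set_nonempty[OF assms(1)]
        label_open[OF assms(1,3)] label_contains_halfspace[OF assms(1,3)])+
  then obtain a s t where "a \<noteq> 0" "s \<le> t"
    and labels: "label_set P R = {{y. t < a \<bullet> y}, {y. a \<bullet> y < s}}"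
    by (elim exE conjE)
  have "R = - \<Union>(label_set P R)"
    using refinement_set_eq_complement[OF assms(1)] by (simp add: feature_space_def)
  also have "\<dots> = {y. s \<le> a \<bullet> y \<and> a \<bullet> y \<le> t}" unfolding labels by auto
  finally have R_eq: "R = {y. s \<le> a \<bullet> y \<and> a \<bullet> y \<le> t}" .
  have "R \<in> null_sets lebesgue" using assms(1) by (simp add: classifier_def)
  then have "t \<le> s" unfolding R_eq by (rule null_slab_imp_le[OF \<open>a \<noteq> 0\<close>])
  with \<open>s \<le> t\<close> have "s = t" by simp
  have "R = {y. a \<bullet> y = t}" using R_eq \<open>s = t\<close> by auto
  moreover have "label_set P R = {{y. a \<bullet> y < t}, {y. a \<bullet> y > t}}"
    using labels \<open>s = t\<close> by (simp add: insert_commute)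
  ultimately show ?thesis
    unfolding refined_linear_classifier_def using assms(1) \<open>a \<noteq> 0\<close> by blast
qed

end
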